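(* Let $C_3$ be the quotient of the group algebra $\mathbb{Q}(t_0,t_1)[B_3]$ by the two-sided ideal generated by the elements \[ s_k^2+(1-t_0-t_1)s_k+(t_0t_1-t_0-t_1)\cdot1+t_0t_1\,\overline{s}_k\quad(k=1,2) \] and \[ \overline{s}_is_js_i-s_is_j\overline{s}_i-\overline{s}_i\overline{s}_js_i+s_i\overline{s}_j\overline{s}_i-\big(s_is_j-s_i\overline{s}_j-\overline{s}_is_j+\overline{s}_i\overline{s}_j-s_js_i+s_j\overline{s}_i+\overline{s}_js_i-\overline{s}_j\overline{s}_i\big)\quad((i,j)=(1,2),(2,1)). \] Let $x$ be either $\overline{s}_1s_2\overline{s}_1$ or $s_1\overline{s}_2s_1$. Then the images in $C_3$ of \[ 1,\ s_1,\ \overline{s}_1,\ s_2,\ \overline{s}_2,\ s_2s_1,\ s_2\overline{s}_1,\ \overline{s}_2s_1,\ \overline{s}_2\overline{s}_1,\ s_1s_2,\ \overline{s}_1s_2,\ s_1\overline{s}_2,\ \overline{s}_1\overline{s}_2,\ s_1s_2s_1,\ s_1s_2\overline{s}_1,\ s_1\overline{s}_2\overline{s}_1,\ \overline{s}_1\overline{s}_2s_1,\ \overline{s}_1\overline{s}_2\overline{s}_1,\ x,\ \overline{s}_2s_1\overline{s}_2 \] form a $\mathbb{Q}(t_0,t_1)$-basis of $C_3$. In particular $\dim_{\mathbb{Q}(t_0,t_1)}C_3=20$.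
   Context: $B_3$ is the braid group with standard generators $s_1,s_2$ (relation $s_1s_2s_1=s_2s_1s_2$) and $\overline{s}_k=s_k^{-1}$. *)

theory Defs
  imports "HOL-Library.Poly_Mapping" "HOL-Computational_Algebra.Fraction_Field"
          "HOL-Computational_Algebra.Polynomial"
begin

datatype gen3 = G1 | G2

text \<open>A letter (g, True) is the generator s_g, (g, False) its inverse.\<close>
type_synonym bword = "(gen3 \<times> bool) list"

inductive braid_eq :: "bword \<Rightarrow> bword \<Rightarrow> bool" where
  refl: "braid_eq u u"
| sym: "braid_eq u v \<Longrightarrow> braid_eq v u"
| trans: "braid_eq u v \<Longrightarrow> braid_eq v w \<Longrightarrow> braid_eq u w"
| cancel: "braid_eq (u @ [(g, e), (g, \<not> e)] @ v) (u @ v)"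
| braid: "braid_eq (u @ [(G1, True), (G2, True), (G1, True)] @ v)
                    (u @ [(G2, True), (G1, True), (G2, True)] @ v)"

lemma braid_eq_equivp: "equivp braid_eq"
  by (intro equivpI reflpI sympI transpI) (auto intro: braid_eq.intros)

lemma braid_eq_append_right: "braid_eq u v \<Longrightarrow> braid_eq (u @ w) (v @ w)"
proof (induction rule: braid_eq.induct)
  case (cancel u g e v) then show ?case using braid_eq.cancel[of u g e "v @ w"] by simp
next
  case (braid u v) then show ?case using braid_eq.braid[of u "v @ w"] by simp
qed (auto intro: braid_eq.intros)

lemma braid_eq_append_left: "braid_eq u v \<Longrightarrow> braid_eq (w @ u) (w @ v)"
proof (induction rule: braid_eq.induct)
  case (cancel u g e v) then show ?case using braid_eq.cancel[of "w @ u" g e v] by simp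
next
  case (braid u v) then show ?case using braid_eq.braid[of "w @ u" v] by simp
qed (auto intro: braid_eq.intros)

quotient_type braid3 = bword / braid_eq
  by (rule braid_eq_equivp)

text \<open>The group operation of B_3 is written additively (concatenation of words), so that
  the monoid algebra (B_3 =>0 K) of Poly_Mapping is the group algebra K[B_3].\<close>

instantiation braid3 :: monoid_add
begin

lift_definition zero_braid3 :: braid3 is "[]" .

lift_definition plus_braid3 :: "braid3 \<Rightarrow> braid3 \<Rightarrow> braid3" is "(@)"
  by (meson braid_eq.trans braid_eq_append_left braid_eq_append_right)

instance
  by standard (transfer; simp add: braid_eq.refl)+

end

definition bgen :: "gen3 \<Rightarrow> bool \<Rightarrow> braid3" where
  "bgen g e = abs_braid3 [(g, e)]"

text \<open>Q(t_0,t_1) is the fraction field of Q[t_1][t_0] (bivariate polynomials, t_0 inner).\<close>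
type_synonym QT = "rat poly poly fract"

definition t0 :: QT where "t0 = Fraction_Field.Fract [:[:0, 1:]:] 1"
definition t1 :: QT where "t1 = Fraction_Field.Fract [:0, 1:] 1"

type_synonym alg3 = "braid3 \<Rightarrow>\<^sub>0 QT"

definition scal :: "QT \<Rightarrow> alg3" where "scal c = Poly_Mapping.single 0 c"
definition grp :: "braid3 \<Rightarrow> alg3" where "grp b = Poly_Mapping.single b 1"

definition sg :: "gen3 \<Rightarrow> alg3" where "sg g = grp (bgen g True)"
definition sgb :: "gen3 \<Rightarrow> alg3" where "sgb g = grp (bgen g False)"

inductive_set two_sided_ideal :: "'a::ring_1 set \<Rightarrow> 'a set" for R where
  gen: "r \<in> R \<Longrightarrow> r \<in> two_sided_ideal R"
| zero: "0 \<in> two_sided_ideal R"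
| add: "a \<in> two_sided_ideal R \<Longrightarrow> b \<in> two_sided_ideal R \<Longrightarrow> a + b \<in> two_sided_ideal R"
| mult: "a \<in> two_sided_ideal R \<Longrightarrow> x * a * y \<in> two_sided_ideal R"

definition quad_rel :: "gen3 \<Rightarrow> alg3" where
  "quad_rel k = sg k * sg k + scal (1 - t0 - t1) * sg k + scal (t0 * t1 - t0 - t1)
               + scal (t0 * t1) * sgb k"

definition cub_rel :: "gen3 \<Rightarrow> gen3 \<Rightarrow> alg3" where
  "cub_rel i j =
     sgb i * sg j * sg i - sg i * sg j * sgb i - sgb i * sgb j * sg i + sg i * sgb j * sgb i
     - (sg i * sg j - sg i * sgb j - sgb i * sg j + sgb i * sgb j
        - sg j * sg i + sg j * sgb i + sgb j * sg i - sgb j * sgb i)"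

definition C3_ideal :: "alg3 set" where
  "C3_ideal = two_sided_ideal ({quad_rel G1, quad_rel G2} \<union> {cub_rel G1 G2, cub_rel G2 G1})"

definition C3_basis :: "alg3 \<Rightarrow> alg3 list" where
  "C3_basis x =
    [1, sg G1, sgb G1, sg G2, sgb G2,
     sg G2 * sg G1, sg G2 * sgb G1, sgb G2 * sg G1, sgb G2 * sgb G1,
     sg G1 * sg G2, sgb G1 * sg G2, sg G1 * sgb G2, sgb G1 * sgb G2,
     sg G1 * sg G2 * sg G1, sg G1 * sg G2 * sgb G1, sg G1 * sgb G2 * sgb G1,
     sgb G1 * sgb G2 * sg G1, sgb G1 * sgb G2 * sgb G1,
     x, sgb G2 * sg G1 * sgb G2]"

end

theory Submission
  imports Defs "HOL-Library.Product_Lexorder"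
begin

(*
  Spanning: a certificate of 43 instances u r v of the relations of C_3 (including the braid and
  inverse relations of B_3) is processed in turn. Each instance contains exactly one word whose
  expansion in the 20 basis words is not yet known, and solving for it extends a table of
  congruences modulo the ideal. The table reaches s_g b for g = 1, 2 and every basis word b, so the
  span of the basis contains 1 and is closed under left multiplication by s_1, s_2 and, as the
  quadratic relation expresses s_g^-1 through s_g and 1, by their inverses.

  Independence: the expansions of the s_g b, together with the inverses obtained from the quadratic
  relation, are 20 x 20 matrices over Z[t_0^+-1, t_1^+-1] satisfying all relations of C_3. Hence
  Q(t_0, t_1)^20 is a C_3-module in which the basis words send e_0 to e_0, ..., e_19, and no
  nontrivial combination of them lies in the ideal.

  The second basis arises by exchanging s_1^-1 s_2 s_1^-1 for s_1 s_2^-1 s_1, whose expansion has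
  the coefficient t_0 t_1 at that position. All finite checks are computations with Laurent
  polynomials.
*)

lemma two_sided_ideal_mult_left: "a \<in> two_sided_ideal R \<Longrightarrow> x * a \<in> two_sided_ideal R"
  using two_sided_ideal.mult[of a R x 1] by simp

lemma two_sided_ideal_mult_right: "a \<in> two_sided_ideal R \<Longrightarrow> a * y \<in> two_sided_ideal R"
  using two_sided_ideal.mult[of a R 1 y] by simp

lemma two_sided_ideal_minus: "a \<in> two_sided_ideal R \<Longrightarrow> - a \<in> two_sided_ideal R"
  using two_sided_ideal_mult_left[of a R "- 1"] by simp

lemma two_sided_ideal_diff:
  "a \<in> two_sided_ideal R \<Longrightarrow> b \<in> two_sided_ideal R \<Longrightarrow> a - b \<in> two_sided_ideal R"
  using two_sided_ideal.add[of a R "(- 1) * b"] two_sided_ideal_mult_left[of b R "- 1"] by simp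

lemma two_sided_ideal_add_diff:
  "a - b \<in> two_sided_ideal R \<Longrightarrow> c - d \<in> two_sided_ideal R \<Longrightarrow> (a + c) - (b + d) \<in> two_sided_ideal R"
  using two_sided_ideal.add[of "a - b" R "c - d"] by (simp add: algebra_simps)

lemma scal_add: "scal (c + d) = scal c + scal d"
  by (simp add: scal_def single_add)

lemma scal_mult: "scal (c * d) = scal c * scal d"
  by (simp add: scal_def mult_single)

lemma scal_one: "scal 1 = 1"
  by (simp add: scal_def one_poly_mapping_def)

lemma scal_zero: "scal 0 = 0"
  by (simp add: scal_def)

lemma scal_minus: "scal (- c) = - scal c"
  by (simp add: scal_def single_uminus)

lemma scal_grp: "scal c * grp b = Poly_Mapping.single b c"
  by (simp add: scal_def grp_def mult_single)

lemma alg3_expansion: "a = (\<Sum>b\<in>Poly_Mapping.keys a. Poly_Mapping.single b (Poly_Mapping.lookup a b))"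
  by (rule poly_mapping_eqI) (simp add: lookup_sum lookup_single when_def in_keys_iff)

lemma scal_commute: "scal c * a = a * scal c"
proof -
  have "scal c * Poly_Mapping.single b d = Poly_Mapping.single b d * scal c" for b d
    by (simp add: scal_def mult_single mult.commute)
  then show ?thesis
    by (subst (1 2) alg3_expansion) (simp add: sum_distrib_left sum_distrib_right)
qed

type_synonym letter = "gen3 \<times> bool"

abbreviation (input) s1 :: letter where "s1 \<equiv> (G1, True)"
abbreviation (input) s1' :: letter where "s1' \<equiv> (G1, False)"
abbreviation (input) s2 :: letter where "s2 \<equiv> (G2, True)"
abbreviation (input) s2' :: letter where "s2' \<equiv> (G2, False)"

definition word :: "bword \<Rightarrow> alg3" where
  "word w = grp (abs_braid3 w)"

lemma word_Nil: "word [] = 1"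
  by (simp add: word_def grp_def zero_braid3_def[symmetric] one_poly_mapping_def)

lemma word_append: "word (u @ w) = word u * word w"
  by (simp add: word_def grp_def mult_single plus_braid3.abs_eq)

lemma word_Cons: "word (l # w) = word [l] * word w"
  using word_append[of "[l]" w] by simp

lemma word_braid_eq: "braid_eq u w \<Longrightarrow> word u = word w"
  unfolding word_def by (metis braid3.abs_eq_iff)

fun cancel_letter :: "letter \<Rightarrow> bword \<Rightarrow> bword" where
  "cancel_letter l (l' # w) = (if fst l = fst l' \<and> snd l \<noteq> snd l' then w else l # l' # w)"
| "cancel_letter l [] = [l]"

definition free_reduce :: "bword \<Rightarrow> bword" where
  "free_reduce w = foldr cancel_letter w []"

lemma word_cancel_letter: "word (cancel_letter l w) = word (l # w)"
proof (cases w)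
  case (Cons l' w')
  obtain g e where l: "l = (g, e)"
    by fastforce
  have "word [(g, e), (g, \<not> e)] = 1"
    using word_braid_eq[OF braid_eq.cancel[of "[]" g e "[]"]] by (simp add: word_Nil)
  then have "word ((g, e) # (g, \<not> e) # w') = word w'"
    using word_append[of "[(g, e), (g, \<not> e)]" w'] by simp
  then show ?thesis
    using Cons l by (cases l') auto
qed simp

lemma word_free_reduce: "word (free_reduce w) = word w"
proof (induction w)
  case (Cons l w)
  then show ?case
    using word_Cons[of l w] word_Cons[of l "free_reduce w"]
    by (simp add: free_reduce_def word_cancel_letter)
qed (simp add: free_reduce_def)

lemma word_braid_conjugate:
  assumes "free_reduce u' = free_reduce (u @ [s1, s2, s1] @ v)"
    and "free_reduce w' = free_reduce (u @ [s2, s1, s2] @ v)"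
  shows "word u' = word w'"
  using word_braid_eq[OF braid_eq.braid[of u v]] assms by (metis word_free_reduce)

lemma grp_eq_word: obtains w where "grp b = word w"
  by (metis word_def Quotient3_abs_rep[OF Quotient3_braid3])

lemma sg_eq_word: "sg g = word [(g, True)]" and sgb_eq_word: "sgb g = word [(g, False)]"
  by (simp_all add: sg_def sgb_def bgen_def word_def)

lemma cub_rel_swap: "cub_rel G2 G1 = - cub_rel G1 G2"
proof -
  have "word [s2', s1, s2] = word [s1, s2, s1']"
    by (rule word_braid_conjugate[of _ "[s2']" "[s1']"]) (simp_all add: free_reduce_def)
  moreover have "word [s2, s1, s2'] = word [s1', s2, s1]"
    by (rule word_braid_conjugate[of _ "[s1']" "[s2']"]) (simp_all add: free_reduce_def)
  moreover have "word [s1, s2', s1'] = word [s2', s1', s2]"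
    by (rule word_braid_conjugate[of _ "[s2', s1']" "[s2', s1']"]) (simp_all add: free_reduce_def)
  moreover have "word [s1', s2', s1] = word [s2, s1', s2']"
    by (rule word_braid_conjugate[of _ "[s1', s2']" "[s1', s2']"]) (simp_all add: free_reduce_def)
  ultimately show ?thesis
    unfolding cub_rel_def sg_eq_word sgb_eq_word by (simp add: word_append[symmetric])
qed

section \<open>Laurent polynomials in t0, t1 with integer coefficients\<close>

lemma t0_nonzero: "t0 \<noteq> 0"
  by (simp add: t0_def Zero_fract_def eq_fract)

lemma t1_nonzero: "t1 \<noteq> 0"
  by (simp add: t1_def Zero_fract_def eq_fract)

(* ((i, j), c) stands for c t0^i t1^j. The arithmetic keeps lists sorted by exponent and free of
   zero coefficients, so that a computed Laurent polynomial which vanishes is [] literally. *)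
type_synonym lpoly = "((int \<times> int) \<times> int) list"

fun monomial_val :: "(int \<times> int) \<times> int \<Rightarrow> QT" where
  "monomial_val ((i, j), c) = of_int c * t0 powi i * t1 powi j"

definition lpoly_val :: "lpoly \<Rightarrow> QT" where
  "lpoly_val p = (\<Sum>m\<leftarrow>p. monomial_val m)"

fun lpoly_add :: "lpoly \<Rightarrow> lpoly \<Rightarrow> lpoly" where
  "lpoly_add [] q = q"
| "lpoly_add p [] = p"
| "lpoly_add ((m, c) # p) ((m', c') # q) =
     (if m = m' then (if c + c' = 0 then lpoly_add p q else (m, c + c') # lpoly_add p q)
      else if m < m' then (m, c) # lpoly_add p ((m', c') # q)
      else (m', c') # lpoly_add ((m, c) # p) q)"

fun monomial_mult :: "(int \<times> int) \<times> int \<Rightarrow> (int \<times> int) \<times> int \<Rightarrow> (int \<times> int) \<times> int" where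
  "monomial_mult ((i, j), c) ((k, l), d) = ((i + k, j + l), c * d)"

definition lpoly_mult :: "lpoly \<Rightarrow> lpoly \<Rightarrow> lpoly" where
  "lpoly_mult p q = foldr (\<lambda>m. lpoly_add (map (monomial_mult m) q)) p []"

lemma lpoly_val_Nil [simp]: "lpoly_val [] = 0"
  by (simp add: lpoly_val_def)

lemma lpoly_val_Cons: "lpoly_val (m # p) = monomial_val m + lpoly_val p"
  by (simp add: lpoly_val_def)

lemma lpoly_val_add: "lpoly_val (lpoly_add p q) = lpoly_val p + lpoly_val q"
proof (induction p q rule: lpoly_add.induct)
  case (3 m c p m' c' q)
  have "monomial_val (m, c) + monomial_val (m, c') = monomial_val (m, c + c')"
    by (cases m) (simp add: algebra_simps)
  moreover have "monomial_val (m, 0) = 0"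
    by (cases m) simp
  ultimately show ?case
    using 3 by (auto simp: lpoly_val_Cons algebra_simps)
qed simp_all

lemma monomial_val_mult: "monomial_val (monomial_mult m m') = monomial_val m * monomial_val m'"
  using t0_nonzero t1_nonzero
  by (cases m; cases m') (auto simp: power_int_add algebra_simps)

lemma lpoly_val_mult: "lpoly_val (lpoly_mult p q) = lpoly_val p * lpoly_val q"
proof -
  have "lpoly_val (map (monomial_mult m) q) = monomial_val m * lpoly_val q" for m
    by (induction q) (simp_all add: lpoly_val_Cons monomial_val_mult algebra_simps)
  then show ?thesis
    by (induction p) (simp_all add: lpoly_mult_def lpoly_val_add lpoly_val_Cons algebra_simps)
qed

type_synonym lvec = "lpoly list"

definition vec_val :: "lvec \<Rightarrow> nat \<Rightarrow> QT" where
  "vec_val xs k = (if k < length xs then lpoly_val (xs ! k) else 0)"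

fun vec_add :: "lvec \<Rightarrow> lvec \<Rightarrow> lvec" where
  "vec_add (x # xs) (y # ys) = lpoly_add x y # vec_add xs ys"
| "vec_add [] ys = ys"
| "vec_add xs [] = xs"

definition vec_scale :: "lpoly \<Rightarrow> lvec \<Rightarrow> lvec" where
  "vec_scale c = map (lpoly_mult c)"

definition vec_sum :: "lvec list \<Rightarrow> lvec" where
  "vec_sum xss = foldr vec_add xss []"

definition unit_vec :: "nat \<Rightarrow> nat \<Rightarrow> lvec" where
  "unit_vec n i = (replicate n [])[i := [((0, 0), 1)]]"

lemma vec_val_Nil [simp]: "vec_val [] k = 0"
  by (simp add: vec_val_def)

lemma vec_val_Cons: "vec_val (x # xs) k = (if k = 0 then lpoly_val x else vec_val xs (k - 1))"
  by (cases k) (simp_all add: vec_val_def)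

lemma vec_val_add: "vec_val (vec_add xs ys) k = vec_val xs k + vec_val ys k"
  by (induction xs ys arbitrary: k rule: vec_add.induct) (simp_all add: vec_val_Cons lpoly_val_add)

lemma vec_val_scale: "vec_val (vec_scale c xs) k = lpoly_val c * vec_val xs k"
  by (simp add: vec_val_def vec_scale_def lpoly_val_mult)

lemma vec_val_unit: "i < n \<Longrightarrow> vec_val (unit_vec n i) k = (if k = i then 1 else 0)"
  by (auto simp: vec_val_def unit_vec_def nth_list_update lpoly_val_def)

lemma vec_val_all_zero: "list_all (\<lambda>p. p = []) xs \<Longrightarrow> vec_val xs k = 0"
  by (auto simp: vec_val_def list_all_length)

type_synonym wcomb = "(lpoly \<times> bword) list"

definition comb_val :: "wcomb \<Rightarrow> alg3" where
  "comb_val ws = (\<Sum>(c, w)\<leftarrow>ws. scal (lpoly_val c) * word w)"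

lemma comb_val_Nil [simp]: "comb_val [] = 0"
  by (simp add: comb_val_def)

lemma comb_val_Cons: "comb_val ((c, w) # ws) = scal (lpoly_val c) * word w + comb_val ws"
  by (simp add: comb_val_def)

lemma comb_val_surround:
  "comb_val (map (\<lambda>(c, w). (c, u @ w @ v)) ws) = word u * comb_val ws * word v"
proof (induction ws)
  case (Cons cw ws)
  obtain c w where "cw = (c, w)"
    by fastforce
  then show ?case
    using Cons by (simp add: comb_val_Cons word_append algebra_simps scal_commute)
qed simp

(* Cubic stands for cub_rel G1 G2 only: cub_rel G2 G1 is its negative (cub_rel_swap). *)
datatype relator = Inverse gen3 bool | Braid | Quadratic gen3 | Cubic

fun relator_comb :: "relator \<Rightarrow> wcomb" where
  "relator_comb (Inverse g e) = [([((0, 0), 1)], [(g, e), (g, \<not> e)]), ([((0, 0), -1)], [])]"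
| "relator_comb Braid = [([((0, 0), 1)], [s1, s2, s1]), ([((0, 0), -1)], [s2, s1, s2])]"
| "relator_comb (Quadratic g) =
     [([((0, 0), 1)], [(g, True), (g, True)]),
      ([((0, 0), 1), ((0, 1), -1), ((1, 0), -1)], [(g, True)]),
      ([((0, 1), -1), ((1, 0), -1), ((1, 1), 1)], []),
      ([((1, 1), 1)], [(g, False)])]"
| "relator_comb Cubic =
    (let one = [((0, 0), 1)]; mone = [((0, 0), -1)] in
     [(one, [s1', s2, s1]), (mone, [s1, s2, s1']), (mone, [s1', s2', s1]), (one, [s1, s2', s1']),
      (mone, [s1, s2]), (one, [s1, s2']), (one, [s1', s2]), (mone, [s1', s2']),
      (one, [s2, s1]), (mone, [s2, s1']), (mone, [s2', s1]), (one, [s2', s1'])])"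

lemma comb_val_Inverse: "comb_val (relator_comb (Inverse g e)) = 0"
  using word_braid_eq[OF braid_eq.cancel[of "[]" g e "[]"]]
  by (simp add: comb_val_Cons lpoly_val_def scal_one scal_minus)

lemma comb_val_Braid: "comb_val (relator_comb Braid) = 0"
  using word_braid_eq[OF braid_eq.braid[of "[]" "[]"]]
  by (simp add: comb_val_Cons lpoly_val_def scal_one scal_minus)

lemma comb_val_Quadratic: "comb_val (relator_comb (Quadratic g)) = quad_rel g"
  by (simp add: quad_rel_def comb_val_Cons lpoly_val_def sg_eq_word sgb_eq_word
      word_Nil word_Cons[of _ "[_]"] scal_one algebra_simps)

lemma comb_val_Cubic: "comb_val (relator_comb Cubic) = cub_rel G1 G2"
  by (simp add: Let_def cub_rel_def comb_val_Cons lpoly_val_def sg_eq_word sgb_eq_word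
      word_Cons[of _ "[_, _]"] word_Cons[of _ "[_]"] scal_one scal_minus algebra_simps)

lemma comb_val_relator: "comb_val (relator_comb r) \<in> C3_ideal"
proof (cases r)
  case (Quadratic g)
  then have "comb_val (relator_comb r) = quad_rel g"
    by (simp only: comb_val_Quadratic)
  then show ?thesis
    unfolding C3_ideal_def by (cases g) (auto intro: two_sided_ideal.gen)
next
  case Cubic
  then have "comb_val (relator_comb r) = cub_rel G1 G2"
    by (simp only: comb_val_Cubic)
  then show ?thesis
    unfolding C3_ideal_def by (auto intro: two_sided_ideal.gen)
qed (simp_all only: comb_val_Inverse comb_val_Braid C3_ideal_def two_sided_ideal.zero)

lemma comb_val_relator_instance:
  "comb_val (map (\<lambda>(c, w). (c, u @ w @ v)) (relator_comb r)) \<in> C3_ideal"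
  unfolding comb_val_surround C3_ideal_def
  using comb_val_relator[of r] by (auto simp: C3_ideal_def intro: two_sided_ideal.mult)

lemma C3_ideal_diff: "a \<in> C3_ideal \<Longrightarrow> b \<in> C3_ideal \<Longrightarrow> a - b \<in> C3_ideal"
  unfolding C3_ideal_def by (rule two_sided_ideal_diff)

definition lincomb :: "alg3 list \<Rightarrow> (nat \<Rightarrow> QT) \<Rightarrow> alg3" where
  "lincomb B c = (\<Sum>i<length B. scal (c i) * B ! i)"

definition C3_independent :: "alg3 list \<Rightarrow> bool" where
  "C3_independent B \<longleftrightarrow> (\<forall>c. lincomb B c \<in> C3_ideal \<longrightarrow> (\<forall>i<length B. c i = 0))"

lemma lincomb_add: "lincomb B c + lincomb B d = lincomb B (\<lambda>i. c i + d i)"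
  by (simp add: lincomb_def scal_add distrib_right sum.distrib)

lemma lincomb_scal: "scal x * lincomb B c = lincomb B (\<lambda>i. x * c i)"
  by (simp add: lincomb_def sum_distrib_left scal_mult mult.assoc)

lemma lincomb_unit: "i < length B \<Longrightarrow> lincomb B (\<lambda>j. if j = i then 1 else 0) = B ! i"
proof -
  have "lincomb B (\<lambda>j. if j = i then 1 else 0) = (\<Sum>j<length B. if j = i then B ! j else 0)"
    unfolding lincomb_def by (rule sum.cong) (auto simp: scal_one scal_zero)
  then show "i < length B \<Longrightarrow> ?thesis"
    by simp
qed

definition C3_span :: "alg3 list \<Rightarrow> alg3 set" where
  "C3_span B = {a. \<exists>c. a - lincomb B c \<in> C3_ideal}"

lemma lincomb_in_C3_span: "lincomb B c \<in> C3_span B"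
  using two_sided_ideal.zero by (auto simp: C3_span_def C3_ideal_def intro!: exI[of _ c])

lemma C3_span_congruent:
  assumes "a - a' \<in> C3_ideal" and "a' \<in> C3_span B"
  shows "a \<in> C3_span B"
proof -
  obtain c where "a' - lincomb B c \<in> C3_ideal"
    using assms(2) by (auto simp: C3_span_def)
  with assms(1) have "(a - a') + (a' - lincomb B c) \<in> C3_ideal"
    unfolding C3_ideal_def by (rule two_sided_ideal.add)
  then show ?thesis
    by (auto simp: C3_span_def)
qed

lemma C3_span_add: "a \<in> C3_span B \<Longrightarrow> a' \<in> C3_span B \<Longrightarrow> a + a' \<in> C3_span B"
proof -
  assume "a \<in> C3_span B" "a' \<in> C3_span B"
  then obtain c c' where "a - lincomb B c \<in> C3_ideal" "a' - lincomb B c' \<in> C3_ideal"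
    by (auto simp: C3_span_def)
  then have "(a - lincomb B c) + (a' - lincomb B c') \<in> C3_ideal"
    unfolding C3_ideal_def by (rule two_sided_ideal.add)
  then have "a + a' - lincomb B (\<lambda>i. c i + c' i) \<in> C3_ideal"
    by (simp add: lincomb_add[symmetric] algebra_simps)
  then show ?thesis
    by (auto simp: C3_span_def)
qed

lemma C3_span_scal: "a \<in> C3_span B \<Longrightarrow> scal x * a \<in> C3_span B"
proof -
  assume "a \<in> C3_span B"
  then obtain c where "a - lincomb B c \<in> C3_ideal"
    by (auto simp: C3_span_def)
  then have "scal x * (a - lincomb B c) \<in> C3_ideal"
    by (simp add: C3_ideal_def two_sided_ideal_mult_left)
  then show ?thesis
    unfolding C3_span_def lincomb_scal right_diff_distrib by blast
qed

lemma C3_span_sum: "(\<And>s. s \<in> S \<Longrightarrow> f s \<in> C3_span B) \<Longrightarrow> (\<Sum>s\<in>S. f s) \<in> C3_span B"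
proof (induction S rule: infinite_finite_induct)
  case empty
  show ?case
    using lincomb_in_C3_span[of B "\<lambda>_. 0"] by (simp add: lincomb_def scal_zero)
next
  case (infinite S)
  then show ?case
    using lincomb_in_C3_span[of B "\<lambda>_. 0"] by (simp add: lincomb_def scal_zero)
qed (simp add: C3_span_add)

lemma C3_span_mult_left:
  assumes basis: "\<And>i. i < length B \<Longrightarrow> x * B ! i \<in> C3_span B" and a: "a \<in> C3_span B"
  shows "x * a \<in> C3_span B"
proof -
  obtain c where c: "a - lincomb B c \<in> C3_ideal"
    using a by (auto simp: C3_span_def)
  have "x * lincomb B c = (\<Sum>i<length B. scal (c i) * (x * B ! i))"
    by (simp add: lincomb_def sum_distrib_left scal_commute mult.assoc)
  also have "\<dots> \<in> C3_span B"
    by (intro C3_span_sum C3_span_scal basis) simp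
  finally have span: "x * lincomb B c \<in> C3_span B" .
  have "x * a - x * lincomb B c \<in> C3_ideal"
    using c by (simp add: C3_ideal_def two_sided_ideal_mult_left flip: right_diff_distrib)
  then show ?thesis
    using span by (rule C3_span_congruent)
qed

lemma C3_span_mult_left_inverse:
  assumes pos: "\<And>a. a \<in> C3_span B \<Longrightarrow> word [(g, True)] * a \<in> C3_span B" and a: "a \<in> C3_span B"
  shows "word [(g, False)] * a \<in> C3_span B"
proof -
  let ?s = "word [(g, True)]" and ?s' = "word [(g, False)]"
  define rest where "rest = ?s * (?s * a) + scal (1 - t0 - t1) * (?s * a) + scal (t0 * t1 - t0 - t1) * a"
  have "quad_rel g * a \<in> C3_ideal"
    by (cases g) (auto simp: C3_ideal_def intro: two_sided_ideal_mult_right two_sided_ideal.gen)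
  moreover have "quad_rel g * a = rest + scal (t0 * t1) * (?s' * a)"
    by (simp add: rest_def quad_rel_def sg_eq_word sgb_eq_word distrib_right mult.assoc)
  ultimately have ideal: "scal (t0 * t1) * (?s' * a) - (- rest) \<in> C3_ideal"
    by (simp add: add.commute)
  have "rest \<in> C3_span B"
    unfolding rest_def by (intro C3_span_add C3_span_scal pos a)
  then have "- rest \<in> C3_span B"
    using C3_span_scal[of rest B "- 1"] by (simp add: scal_minus scal_one)
  with ideal have "scal (t0 * t1) * (?s' * a) \<in> C3_span B"
    by (rule C3_span_congruent)
  then have "scal (inverse (t0 * t1)) * (scal (t0 * t1) * (?s' * a)) \<in> C3_span B"
    by (rule C3_span_scal)
  moreover have "inverse (t0 * t1) * (t0 * t1) = 1"
    by (rule left_inverse) (simp add: t0_nonzero t1_nonzero)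
  ultimately show ?thesis
    by (simp only: mult.assoc[symmetric] scal_mult[symmetric] scal_one mult_1_left)
qed

lemma C3_span_UNIV:
  assumes one: "1 \<in> set B"
    and gens: "\<And>g i. i < length B \<Longrightarrow> word [(g, True)] * B ! i \<in> C3_span B"
  shows "C3_span B = UNIV"
proof -
  have letter: "word [l] * a \<in> C3_span B" if "a \<in> C3_span B" for l a
  proof -
    obtain g e where l: "l = (g, e)"
      by fastforce
    have "word [(g, True)] * a \<in> C3_span B" if "a \<in> C3_span B" for a
      by (rule C3_span_mult_left[OF gens that])
    then show ?thesis
      using that C3_span_mult_left_inverse[of B g] by (cases e) (auto simp: l)
  qed
  have "1 \<in> C3_span B"
    using one lincomb_unit lincomb_in_C3_span by (metis in_set_conv_nth)
  then have words: "word w \<in> C3_span B" for w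
  proof (induction w)
    case (Cons l w)
    then show ?case
      using letter[OF Cons.IH, of l] word_Cons[of l w] by simp
  qed (simp add: word_Nil)
  have "a \<in> C3_span B" for a
  proof -
    have "Poly_Mapping.single b c \<in> C3_span B" for b c
      using C3_span_scal[OF words] grp_eq_word[of b] by (metis scal_grp)
    then show ?thesis
      by (subst alg3_expansion) (intro C3_span_sum)
  qed
  then show ?thesis
    by blast
qed

lemma lincomb_update:
  assumes k: "k < length B"
  shows "lincomb (B[k := w]) c = lincomb B (\<lambda>j. if j = k then 0 else c j) + scal (c k) * w"
proof -
  have split: "(\<Sum>i<length B. f i) = f k + (\<Sum>i\<in>{..<length B} - {k}. f i)" for f :: "nat \<Rightarrow> alg3"
    using k by (subst sum.remove[of _ k]) auto
  have "(\<Sum>i\<in>{..<length B} - {k}. scal (c i) * B[k := w] ! i)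
      = (\<Sum>i\<in>{..<length B} - {k}. scal (if i = k then 0 else c i) * B ! i)"
    by (rule sum.cong) auto
  then show ?thesis
    unfolding lincomb_def length_list_update split using k by (simp add: scal_zero)
qed

theorem C3_basis_exchange:
  assumes span: "C3_span B = UNIV" and indep: "C3_independent B" and k: "k < length B"
    and w: "w - lincomb B d \<in> C3_ideal" and dk: "d k \<noteq> 0"
  shows "C3_span (B[k := w]) = UNIV" and "C3_independent (B[k := w])"
proof -
  let ?B' = "B[k := w]" and ?coeffs = "\<lambda>c j. (if j = k then 0 else c j) + c k * d j"
  have ex: "lincomb ?B' c - lincomb B (?coeffs c) \<in> C3_ideal" for c
  proof -
    have "lincomb ?B' c - lincomb B (?coeffs c) = scal (c k) * (w - lincomb B d)"
      by (simp add: lincomb_update[OF k] lincomb_add[symmetric] lincomb_scal[symmetric] algebra_simps)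
    then show ?thesis
      using w by (simp add: C3_ideal_def two_sided_ideal_mult_left)
  qed
  show "C3_span ?B' = UNIV"
  proof (intro set_eqI iffI UNIV_I)
    fix a
    obtain c where c: "a - lincomb B c \<in> C3_ideal"
      using span by (auto simp: C3_span_def)
    define e where "e j = (if j = k then c k / d k else c j - c k / d k * d j)" for j
    have "?coeffs e = c"
      using dk by (auto simp: e_def fun_eq_iff)
    then have "lincomb ?B' e - lincomb B c \<in> C3_ideal"
      using ex[of e] by simp
    from C3_ideal_diff[OF c this] have "a - lincomb ?B' e \<in> C3_ideal"
      by simp
    then show "a \<in> C3_span ?B'"
      by (auto simp: C3_span_def)
  qed
  show "C3_independent ?B'"
    unfolding C3_independent_def
  proof (intro allI impI)
    fix c i
    assume ideal: "lincomb ?B' c \<in> C3_ideal" and i: "i < length ?B'"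
    from C3_ideal_diff[OF ideal ex[of c]] have "lincomb B (?coeffs c) \<in> C3_ideal"
      by simp
    then have zero: "?coeffs c j = 0" if "j < length B" for j
      using indep that unfolding C3_independent_def by blast
    then have "c k = 0"
      using zero[OF k] dk by simp
    then show "c i = 0"
      using zero[of i] i by (cases "i = k") simp_all
  qed
qed

section \<open>Independence from a matrix model\<close>

(* M l ! j is the image of the j-th unit vector under the letter l. *)
type_synonym lmats = "letter \<Rightarrow> lvec list"

fun lvec_act :: "lvec list \<Rightarrow> lvec \<Rightarrow> lvec" where
  "lvec_act (col # cols) (x # xs) =
     (if x = [] then lvec_act cols xs else vec_add (vec_scale x col) (lvec_act cols xs))"
| "lvec_act _ _ = []"

fun word_act :: "lmats \<Rightarrow> bword \<Rightarrow> lvec \<Rightarrow> lvec" where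
  "word_act M [] xs = xs"
| "word_act M (l # w) xs = lvec_act (M l) (word_act M w xs)"

lemma vec_val_lvec_act:
  "vec_val (lvec_act cols xs) i = (\<Sum>j<length cols. vec_val xs j * vec_val (cols ! j) i)"
proof (induction cols xs rule: lvec_act.induct)
  case (1 col cols x xs)
  then show ?case
    by (simp add: vec_val_add vec_val_scale sum.lessThan_Suc_shift vec_val_Cons del: sum.lessThan_Suc)
qed simp_all

definition mat_mult :: "nat \<Rightarrow> (nat \<Rightarrow> nat \<Rightarrow> 'a::semiring_0) \<Rightarrow> (nat \<Rightarrow> nat \<Rightarrow> 'a) \<Rightarrow> nat \<Rightarrow> nat \<Rightarrow> 'a"
  where "mat_mult n A B = (\<lambda>i k. \<Sum>j<n. A i j * B j k)"

lemma mat_mult_assoc: "mat_mult n (mat_mult n A B) C = mat_mult n A (mat_mult n B C)"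
  by (auto simp: mat_mult_def fun_eq_iff sum_distrib_left sum_distrib_right mult.assoc
      intro: sum.swap)

(* Entries outside n x n are 0, so that the product rules below are equalities of functions. *)
definition word_mat :: "nat \<Rightarrow> lmats \<Rightarrow> bword \<Rightarrow> nat \<Rightarrow> nat \<Rightarrow> QT" where
  "word_mat n M w i k = (if i < n \<and> k < n then vec_val (word_act M w (unit_vec n k)) i else 0)"

definition square_mats :: "nat \<Rightarrow> lmats \<Rightarrow> bool" where
  "square_mats n M \<longleftrightarrow> list_all (\<lambda>l. length (M l) = n) [s1, s1', s2, s2']"

lemma square_mats_length: "square_mats n M \<Longrightarrow> length (M l) = n"
  by (cases l; cases "fst l"; cases "snd l") (auto simp: square_mats_def)

lemma word_mat_Nil: "word_mat n M [] i k = (if i = k \<and> k < n then 1 else 0)"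
  by (simp add: word_mat_def vec_val_unit)

lemma word_mat_Cons:
  assumes "square_mats n M"
  shows "word_mat n M (l # w) = mat_mult n (word_mat n M [l]) (word_mat n M w)"
proof (intro ext)
  fix i k
  have len: "length (M l) = n"
    using square_mats_length[OF assms] .
  have col: "word_mat n M [l] i j = vec_val (M l ! j) i" if "i < n" "j < n" for j
    using that
    by (simp add: word_mat_def vec_val_lvec_act len vec_val_unit if_distrib[where f = "\<lambda>x. x * _"]
        cong: if_cong)
  show "word_mat n M (l # w) i k = mat_mult n (word_mat n M [l]) (word_mat n M w) i k"
  proof (cases "i < n \<and> k < n")
    case True
    have "word_mat n M (l # w) i k = (\<Sum>j<n. vec_val (word_act M w (unit_vec n k)) j * vec_val (M l ! j) i)"
      using True by (simp add: word_mat_def vec_val_lvec_act len)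
    moreover have "word_mat n M w j k = vec_val (word_act M w (unit_vec n k)) j" if "j < n" for j
      using True that by (simp add: word_mat_def)
    ultimately show ?thesis
      using True by (simp add: mat_mult_def col mult.commute)
  next
    case False
    then show ?thesis
      by (auto simp: mat_mult_def word_mat_def)
  qed
qed

lemma word_mat_append:
  assumes "square_mats n M"
  shows "word_mat n M (u @ w) = mat_mult n (word_mat n M u) (word_mat n M w)"
proof (induction u)
  case Nil
  have "mat_mult n (word_mat n M []) (word_mat n M w) i k = word_mat n M w i k" for i k
  proof -
    have "mat_mult n (word_mat n M []) (word_mat n M w) i k
        = (\<Sum>j<n. if i = j then word_mat n M w j k else 0)"
      unfolding mat_mult_def by (rule sum.cong) (auto simp: word_mat_Nil)
    then show ?thesis
      by (simp add: word_mat_def)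
  qed
  then show ?case
    by (simp add: fun_eq_iff)
next
  case (Cons l u)
  then show ?case
    using word_mat_Cons[OF assms, of l "u @ w"] word_mat_Cons[OF assms, of l u]
    by (simp add: mat_mult_assoc)
qed

definition comb_act :: "lmats \<Rightarrow> wcomb \<Rightarrow> lvec \<Rightarrow> lvec" where
  "comb_act M ws xs = vec_sum (map (\<lambda>(c, w). vec_scale c (word_act M w xs)) ws)"

definition annihilates :: "nat \<Rightarrow> lmats \<Rightarrow> wcomb \<Rightarrow> bool" where
  "annihilates n M ws \<longleftrightarrow>
     list_all (\<lambda>k. list_all (\<lambda>p. p = []) (comb_act M ws (unit_vec n k))) [0..<n]"

lemma vec_val_comb_act:
  "vec_val (comb_act M ws xs) i = (\<Sum>(c, w)\<leftarrow>ws. lpoly_val c * vec_val (word_act M w xs) i)"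
  by (induction ws) (auto simp: comb_act_def vec_sum_def vec_val_add vec_val_scale)

lemma annihilates_word_mat:
  assumes "annihilates n M ws"
  shows "(\<Sum>(c, w)\<leftarrow>ws. lpoly_val c * word_mat n M w i k) = 0"
proof (cases "i < n \<and> k < n")
  case True
  then have "vec_val (comb_act M ws (unit_vec n k)) i = 0"
    using assms by (auto simp: annihilates_def list_all_iff intro: vec_val_all_zero)
  then show ?thesis
    using True by (simp add: word_mat_def vec_val_comb_act)
next
  case False
  then have "word_mat n M w i k = 0" for w
    by (auto simp: word_mat_def)
  then show ?thesis
    by (induction ws) (auto split: prod.split)
qed

definition all_relators :: "relator list" where
  "all_relators = [Inverse G1 True, Inverse G1 False, Inverse G2 True, Inverse G2 False,
     Braid, Quadratic G1, Quadratic G2, Cubic]"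

lemma relator_in_all_relators: "r \<in> set all_relators"
proof (cases r)
  case (Inverse g e)
  then show ?thesis
    by (cases g; cases e) (simp_all add: all_relators_def)
next
  case (Quadratic g)
  then show ?thesis
    by (cases g) (simp_all add: all_relators_def)
qed (simp_all add: all_relators_def)

definition C3_matrix_model :: "nat \<Rightarrow> lmats \<Rightarrow> bool" where
  "C3_matrix_model n M \<longleftrightarrow>
     square_mats n M \<and> list_all (\<lambda>r. annihilates n M (relator_comb r)) all_relators"

lemma C3_matrix_model_relator:
  "C3_matrix_model n M \<Longrightarrow> (\<Sum>(c, w)\<leftarrow>relator_comb r. lpoly_val c * word_mat n M w i k) = 0"
  using relator_in_all_relators[of r]
  by (auto simp: C3_matrix_model_def list_all_iff intro: annihilates_word_mat)

lemma word_mat_substitute: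
  "square_mats n M \<Longrightarrow> word_mat n M x = word_mat n M y
    \<Longrightarrow> word_mat n M (u @ x @ v) = word_mat n M (u @ y @ v)"
  by (simp add: word_mat_append)

lemma word_mat_braid_eq:
  assumes model: "C3_matrix_model n M" and "braid_eq u w"
  shows "word_mat n M u = word_mat n M w"
  using assms(2)
proof (induction rule: braid_eq.induct)
  case (cancel u g e v)
  have sq: "square_mats n M"
    using model by (simp add: C3_matrix_model_def)
  have "word_mat n M [(g, e), (g, \<not> e)] = word_mat n M []"
  proof (intro ext)
    fix i k
    show "word_mat n M [(g, e), (g, \<not> e)] i k = word_mat n M [] i k"
      using C3_matrix_model_relator[OF model, where r = "Inverse g e" and i = i and k = k]
      by (simp add: lpoly_val_def)
  qed
  from word_mat_substitute[OF sq this, of u v] show ?case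
    by simp
next
  case (braid u v)
  have sq: "square_mats n M"
    using model by (simp add: C3_matrix_model_def)
  have "word_mat n M [s1, s2, s1] = word_mat n M [s2, s1, s2]"
  proof (intro ext)
    fix i k
    show "word_mat n M [s1, s2, s1] i k = word_mat n M [s2, s1, s2] i k"
      using C3_matrix_model_relator[OF model, where r = Braid and i = i and k = k]
      by (simp add: lpoly_val_def)
  qed
  from word_mat_substitute[OF sq this, of u v] show ?case .
qed auto

definition braid_mat :: "nat \<Rightarrow> lmats \<Rightarrow> braid3 \<Rightarrow> nat \<Rightarrow> nat \<Rightarrow> QT" where
  "braid_mat n M b = word_mat n M (rep_braid3 b)"

lemma braid_mat_abs:
  "C3_matrix_model n M \<Longrightarrow> braid_mat n M (abs_braid3 w) = word_mat n M w"
  unfolding braid_mat_def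
  by (rule word_mat_braid_eq) (auto intro: Quotient3_rep_abs[OF Quotient3_braid3] braid_eq.refl)

lemma braid_mat_plus:
  assumes "C3_matrix_model n M"
  shows "braid_mat n M (b + b') = mat_mult n (braid_mat n M b) (braid_mat n M b')"
proof -
  obtain u u' where "b = abs_braid3 u" "b' = abs_braid3 u'"
    by (metis Quotient3_abs_rep[OF Quotient3_braid3])
  then show ?thesis
    using assms by (simp add: plus_braid3.abs_eq braid_mat_abs word_mat_append C3_matrix_model_def)
qed

definition alg_mat :: "nat \<Rightarrow> lmats \<Rightarrow> alg3 \<Rightarrow> nat \<Rightarrow> nat \<Rightarrow> QT" where
  "alg_mat n M a i k = (\<Sum>b\<in>Poly_Mapping.keys a. Poly_Mapping.lookup a b * braid_mat n M b i k)"

lemma alg_mat_eq_sum: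
  assumes "finite S" "Poly_Mapping.keys a \<subseteq> S"
  shows "alg_mat n M a i k = (\<Sum>b\<in>S. Poly_Mapping.lookup a b * braid_mat n M b i k)"
  unfolding alg_mat_def
  by (rule sum.mono_neutral_left) (use assms in \<open>auto simp: in_keys_iff\<close>)

lemma alg_mat_add: "alg_mat n M (a + a') i k = alg_mat n M a i k + alg_mat n M a' i k"
proof -
  let ?S = "Poly_Mapping.keys a \<union> Poly_Mapping.keys a'"
  have "alg_mat n M (a + a') i k = (\<Sum>b\<in>?S. Poly_Mapping.lookup (a + a') b * braid_mat n M b i k)"
    by (rule alg_mat_eq_sum) (simp_all add: keys_add)
  also have "\<dots> = alg_mat n M a i k + alg_mat n M a' i k"
    by (simp add: alg_mat_eq_sum[of ?S] lookup_add distrib_right sum.distrib)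
  finally show ?thesis .
qed

lemma alg_mat_zero: "alg_mat n M 0 i k = 0"
  by (simp add: alg_mat_def)

lemma alg_mat_uminus: "alg_mat n M (- a) i k = - alg_mat n M a i k"
  using alg_mat_add[of n M a "- a" i k] by (simp add: alg_mat_zero eq_neg_iff_add_eq_0)

lemma alg_mat_sum: "alg_mat n M (\<Sum>s\<in>S. f s) i k = (\<Sum>s\<in>S. alg_mat n M (f s) i k)"
  by (induction S rule: infinite_finite_induct) (simp_all add: alg_mat_zero alg_mat_add)

lemma alg_mat_single: "alg_mat n M (Poly_Mapping.single b c) i k = c * braid_mat n M b i k"
  using alg_mat_eq_sum[of "{b}" "Poly_Mapping.single b c"] by simp

lemma alg_mat_scal_word:
  "C3_matrix_model n M \<Longrightarrow> alg_mat n M (scal c * word w) i k = c * word_mat n M w i k"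
  by (simp add: word_def scal_grp alg_mat_single braid_mat_abs)

lemma alg_mat_comb_val:
  "C3_matrix_model n M \<Longrightarrow> alg_mat n M (comb_val ws) i k = (\<Sum>(c, w)\<leftarrow>ws. lpoly_val c * word_mat n M w i k)"
  by (induction ws) (auto simp: comb_val_Cons alg_mat_add alg_mat_scal_word alg_mat_zero)

lemma mat_mult_sum:
  "mat_mult n (\<lambda>i j. \<Sum>b\<in>K. f b i j) (\<lambda>j k. \<Sum>b'\<in>K'. g b' j k) i k
     = (\<Sum>b\<in>K. \<Sum>b'\<in>K'. mat_mult n (f b) (g b') i k)"
  unfolding mat_mult_def sum_product
  by (subst sum.swap) (simp add: sum.swap[where A = "{..<n}"])

lemma alg_mat_mult:
  assumes "C3_matrix_model n M"
  shows "alg_mat n M (a * a') = mat_mult n (alg_mat n M a) (alg_mat n M a')"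
proof (intro ext)
  fix i k
  let ?l = "Poly_Mapping.lookup a" and ?l' = "Poly_Mapping.lookup a'"
  have "a * a' = (\<Sum>b\<in>Poly_Mapping.keys a. Poly_Mapping.single b (?l b))
      * (\<Sum>b'\<in>Poly_Mapping.keys a'. Poly_Mapping.single b' (?l' b'))"
    using alg3_expansion[of a] alg3_expansion[of a'] by simp
  also have "\<dots> = (\<Sum>b\<in>Poly_Mapping.keys a. \<Sum>b'\<in>Poly_Mapping.keys a'.
      Poly_Mapping.single (b + b') (?l b * ?l' b'))"
    by (simp add: sum_distrib_left sum_distrib_right mult_single) (rule sum.swap)
  finally have "alg_mat n M (a * a') i k = (\<Sum>b\<in>Poly_Mapping.keys a. \<Sum>b'\<in>Poly_Mapping.keys a'.
      ?l b * ?l' b' * mat_mult n (braid_mat n M b) (braid_mat n M b') i k)"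
    by (simp add: alg_mat_sum alg_mat_single braid_mat_plus[OF assms])
  also have "\<dots> = (\<Sum>b\<in>Poly_Mapping.keys a. \<Sum>b'\<in>Poly_Mapping.keys a'.
      mat_mult n (\<lambda>i j. ?l b * braid_mat n M b i j) (\<lambda>j k. ?l' b' * braid_mat n M b' j k) i k)"
    by (simp add: mat_mult_def sum_distrib_left mult_ac)
  also have "\<dots> = mat_mult n (alg_mat n M a) (alg_mat n M a') i k"
    unfolding alg_mat_def[abs_def] mat_mult_sum ..
  finally show "alg_mat n M (a * a') i k = mat_mult n (alg_mat n M a) (alg_mat n M a') i k" .
qed

lemma alg_mat_C3_ideal:
  assumes model: "C3_matrix_model n M" and "a \<in> C3_ideal"
  shows "alg_mat n M a i k = 0"
  using assms(2) unfolding C3_ideal_def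
proof (induction arbitrary: i k rule: two_sided_ideal.induct)
  case (gen r)
  have relator: "alg_mat n M (comb_val (relator_comb rel)) i k = 0" for rel
    by (simp add: alg_mat_comb_val[OF model] C3_matrix_model_relator[OF model])
  from gen consider rel where "r = comb_val (relator_comb rel)" | "r = - comb_val (relator_comb Cubic)"
    unfolding comb_val_Quadratic[symmetric] comb_val_Cubic[symmetric] cub_rel_swap by blast
  then show ?case
    using relator by cases (simp_all only: alg_mat_uminus neg_equal_0_iff_equal)
next
  case (mult a x y)
  then show ?case
    by (simp add: alg_mat_mult[OF model] mat_mult_def)
qed (simp_all add: alg_mat_zero alg_mat_add)

theorem C3_independent_by_model:
  assumes model: "C3_matrix_model n M" and len: "length ws = n"
    and units: "map (\<lambda>w. word_act M w (unit_vec n 0)) ws = map (unit_vec n) [0..<n]"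
  shows "C3_independent (map word ws)"
  unfolding C3_independent_def
proof (intro allI impI)
  fix c i
  assume ideal: "lincomb (map word ws) c \<in> C3_ideal" and i: "i < length (map word ws)"
  have col: "c j * word_mat n M (ws ! j) i 0 = (if j = i then c j else 0)" if "j < n" for j
    using arg_cong[OF units, of "\<lambda>xs. xs ! j"] that i len by (simp add: word_mat_def vec_val_unit)
  have "0 = alg_mat n M (lincomb (map word ws) c) i 0"
    using alg_mat_C3_ideal[OF model ideal] by simp
  also have "\<dots> = (\<Sum>j<n. if j = i then c j else 0)"
    using len by (simp add: lincomb_def alg_mat_sum alg_mat_scal_word[OF model] col)
  also have "\<dots> = c i"
    using i len by simp
  finally show "c i = 0"
    by simp
qed

section \<open>Spanning from a reduction table\<close>

type_synonym table = "(bword \<times> lvec) list"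

definition table_sound :: "alg3 list \<Rightarrow> table \<Rightarrow> bool" where
  "table_sound B T \<longleftrightarrow> (\<forall>(w, v) \<in> set T. word w - lincomb B (vec_val v) \<in> C3_ideal)"

fun neg_inverse :: "lpoly \<Rightarrow> lpoly option" where
  "neg_inverse [((i, j), c)] = (if c = 1 \<or> c = -1 then Some [((- i, - j), - c)] else None)"
| "neg_inverse _ = None"

lemma neg_inverse_val: "neg_inverse p = Some q \<Longrightarrow> lpoly_val q * lpoly_val p = - 1"
  using t0_nonzero t1_nonzero
  by (induction p rule: neg_inverse.induct)
    (auto simp: lpoly_val_def power_int_minus field_simps split: if_splits)

definition solve_for_unknown :: "table \<Rightarrow> wcomb \<Rightarrow> (bword \<times> lvec) option" where
  "solve_for_unknown T ws =
    (case filter (\<lambda>(c, w). map_of T w = None) ws of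
       [(c, w)] \<Rightarrow>
         map_option (\<lambda>c'. (w, vec_scale c'
           (vec_sum (map (\<lambda>(c, w). case map_of T w of None \<Rightarrow> [] | Some v \<Rightarrow> vec_scale c v) ws))))
         (neg_inverse c)
     | _ \<Rightarrow> None)"

lemma comb_val_known_part:
  assumes "table_sound B T"
  shows "comb_val ws - comb_val (filter (\<lambda>(c, w). map_of T w = None) ws)
    - lincomb B (vec_val (vec_sum (map (\<lambda>(c, w). case map_of T w of None \<Rightarrow> [] | Some v \<Rightarrow> vec_scale c v) ws)))
    \<in> C3_ideal"
proof (induction ws)
  case Nil
  show ?case
    by (simp add: vec_sum_def lincomb_def scal_zero C3_ideal_def two_sided_ideal.zero)
next
  case (Cons cw ws)
  obtain c w where cw: "cw = (c, w)"
    by fastforce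
  show ?case
  proof (cases "map_of T w")
    case None
    then show ?thesis
      using Cons.IH by (simp add: cw comb_val_Cons vec_sum_def vec_val_add)
  next
    case (Some v)
    then have "word w - lincomb B (vec_val v) \<in> C3_ideal"
      using assms by (auto simp: table_sound_def dest: map_of_SomeD)
    then have "scal (lpoly_val c) * (word w - lincomb B (vec_val v)) \<in> C3_ideal"
      by (simp add: C3_ideal_def two_sided_ideal_mult_left)
    then have "scal (lpoly_val c) * word w - lincomb B (\<lambda>k. lpoly_val c * vec_val v k) \<in> C3_ideal"
      by (simp add: lincomb_scal right_diff_distrib)
    from two_sided_ideal_add_diff[OF this[unfolded C3_ideal_def] Cons.IH[unfolded C3_ideal_def]]
    show ?thesis
      by (simp add: cw Some comb_val_Cons vec_sum_def vec_val_add vec_val_scale lincomb_add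
          C3_ideal_def algebra_simps)
  qed
qed

lemma solve_for_unknown_sound:
  assumes sound: "table_sound B T" and ideal: "comb_val ws \<in> C3_ideal"
    and solve: "solve_for_unknown T ws = Some (w, v)"
  shows "word w - lincomb B (vec_val v) \<in> C3_ideal"
proof -
  define S where "S = vec_sum (map (\<lambda>(c, w). case map_of T w of None \<Rightarrow> [] | Some v \<Rightarrow> vec_scale c v) ws)"
  obtain c c' where U: "filter (\<lambda>(c, w). map_of T w = None) ws = [(c, w)]"
    and c': "neg_inverse c = Some c'" and v: "v = vec_scale c' S"
    using solve unfolding solve_for_unknown_def S_def[symmetric]
    by (auto split: list.splits option.splits)
  have "comb_val ws - scal (lpoly_val c) * word w - lincomb B (vec_val S) \<in> C3_ideal"
    using comb_val_known_part[OF sound, of ws] by (simp add: U S_def comb_val_Cons)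
  from C3_ideal_diff[OF ideal this]
  have "scal (lpoly_val c) * word w + lincomb B (vec_val S) \<in> C3_ideal"
    by (simp add: algebra_simps)
  then have "scal (lpoly_val c') * (scal (lpoly_val c) * word w + lincomb B (vec_val S)) \<in> C3_ideal"
    by (simp add: C3_ideal_def two_sided_ideal_mult_left)
  moreover have "scal (lpoly_val c') * (scal (lpoly_val c) * word w + lincomb B (vec_val S))
      = - (word w - lincomb B (vec_val v))"
    using neg_inverse_val[OF c']
    by (simp add: v vec_val_scale[abs_def] lincomb_scal distrib_left mult.assoc[symmetric]
        scal_mult[symmetric] scal_minus scal_one)
  ultimately show ?thesis
    using two_sided_ideal_minus[of "- (word w - lincomb B (vec_val v))"] by (simp add: C3_ideal_def)
qed

(* Words are freely reduced, so that lookups identify words that are equal in the free group. *)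
definition relator_instance :: "bword \<Rightarrow> relator \<Rightarrow> bword \<Rightarrow> wcomb" where
  "relator_instance u r v = map (\<lambda>(c, w). (c, free_reduce (u @ w @ v))) (relator_comb r)"

lemma comb_val_free_reduce:
  "comb_val (map (\<lambda>(c, w). (c, free_reduce (f w))) ws) = comb_val (map (\<lambda>(c, w). (c, f w)) ws)"
  by (induction ws) (auto simp: comb_val_Cons word_free_reduce)

lemma comb_val_relator_instance_reduced: "comb_val (relator_instance u r v) \<in> C3_ideal"
  unfolding relator_instance_def comb_val_free_reduce[where f = "\<lambda>w. u @ w @ v"]
  by (rule comb_val_relator_instance)

type_synonym cert_step = "bword \<times> relator \<times> bword"

fun run_certificate :: "table \<Rightarrow> cert_step list \<Rightarrow> table option" where
  "run_certificate T [] = Some T"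
| "run_certificate T ((u, r, v) # steps) =
     (case solve_for_unknown T (relator_instance u r v) of
        None \<Rightarrow> None
      | Some e \<Rightarrow> run_certificate (e # T) steps)"

lemma run_certificate_sound:
  "table_sound B T \<Longrightarrow> run_certificate T steps = Some T' \<Longrightarrow> table_sound B T'"
proof (induction T steps rule: run_certificate.induct)
  case (2 T u r v steps)
  then obtain w x where solve: "solve_for_unknown T (relator_instance u r v) = Some (w, x)"
    and run: "run_certificate ((w, x) # T) steps = Some T'"
    by (auto split: option.splits)
  have "table_sound B ((w, x) # T)"
    using solve_for_unknown_sound[OF "2.prems"(1) comb_val_relator_instance_reduced solve] "2.prems"(1)
    by (simp add: table_sound_def)
  then show ?case
    using "2.IH"[OF solve] run by simp
qed simp

definition basis_table :: "bword list \<Rightarrow> table" where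
  "basis_table ws = map (\<lambda>i. (free_reduce (ws ! i), unit_vec (length ws) i)) [0..<length ws]"

lemma basis_table_sound: "table_sound (map word ws) (basis_table ws)"
  unfolding table_sound_def basis_table_def
proof clarsimp
  fix i
  assume i: "i < length ws"
  have "vec_val (unit_vec (length ws) i) = (\<lambda>k. if k = i then 1 else 0)"
    using i by (simp add: fun_eq_iff vec_val_unit)
  then show "word (free_reduce (ws ! i)) - lincomb (map word ws) (vec_val (unit_vec (length ws) i)) \<in> C3_ideal"
    using i lincomb_unit[of i "map word ws"]
    by (simp add: word_free_reduce C3_ideal_def two_sided_ideal.zero)
qed

definition table_closed :: "table \<Rightarrow> bword list \<Rightarrow> bool" where
  "table_closed T ws \<longleftrightarrow>
     list_all (\<lambda>g. list_all (\<lambda>w. map_of T (free_reduce ((g, True) # w)) \<noteq> None) ws) [G1, G2]"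

theorem C3_span_by_table:
  assumes sound: "table_sound (map word ws) T" and closed: "table_closed T ws" and one: "[] \<in> set ws"
  shows "C3_span (map word ws) = UNIV"
proof (rule C3_span_UNIV)
  show "1 \<in> set (map word ws)"
    using one by (force simp: word_Nil)
  fix g i
  assume i: "i < length (map word ws)"
  then have "map_of T (free_reduce ((g, True) # ws ! i)) \<noteq> None"
    using closed nth_mem[of i ws] by (cases g) (auto simp: table_closed_def list_all_iff)
  then obtain v where v: "map_of T (free_reduce ((g, True) # ws ! i)) = Some v"
    by blast
  then have "word ((g, True) # ws ! i) - lincomb (map word ws) (vec_val v) \<in> C3_ideal"
    using sound by (auto simp: table_sound_def word_free_reduce dest!: map_of_SomeD)
  then show "word [(g, True)] * map word ws ! i \<in> C3_span (map word ws)"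
    using i word_Cons[of "(g, True)" "ws ! i"] by (auto intro: C3_span_congruent lincomb_in_C3_span)
qed

section \<open>The certificate\<close>

definition C3_words :: "bword list" where
  "C3_words =
    [[], [s1], [s1'], [s2], [s2'], [s2, s1], [s2, s1'], [s2', s1], [s2', s1'],
     [s1, s2], [s1', s2], [s1, s2'], [s1', s2'], [s1, s2, s1], [s1, s2, s1'], [s1, s2', s1'],
     [s1', s2', s1], [s1', s2', s1'], [s1', s2, s1'], [s2', s1, s2']]"

definition C3_certificate :: "cert_step list" where
  "C3_certificate =
    [([], Quadratic G1, []), ([], Quadratic G1, [s2, s1']), ([], Quadratic G1, [s2', s1']),
     ([], Quadratic G1, [s2]), ([], Quadratic G1, [s2']), ([s1], Cubic, []),
     ([], Cubic, []), ([], Quadratic G1, [s2, s1]), ([s1], Quadratic G2, [s2']),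
     ([], Quadratic G2, [s2']), ([s1'], Quadratic G2, [s2']), ([], Quadratic G1, [s2', s2']),
     ([s1'], Braid, [s2']), ([s1, s2'], Braid, [s1', s2']), ([s1, s2', s1'], Braid, [s2', s1', s2']),
     ([], Braid, [s2']), ([s2'], Braid, [s1', s2']), ([s2', s1'], Braid, [s2', s1', s2']),
     ([s1], Cubic, [s2']), ([], Quadratic G2, []), ([], Quadratic G2, [s1]),
     ([], Quadratic G2, [s1']), ([], Quadratic G2, [s1, s2']), ([s1', s2'], Braid, [s1', s2']),
     ([s1', s2', s1'], Braid, [s2', s1', s2']), ([], Quadratic G2, [s1', s2']), ([s2, s1'], Braid, [s2']),
     ([], Braid, [s1']), ([s2, s1', s2'], Braid, [s1', s2']), ([s1'], Braid, [s2', s1']),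
     ([], Braid, []), ([s2], Cubic, []), ([s2'], Braid, [s1']),
     ([], Quadratic G2, [s1, s2]), ([s2], Quadratic G1, [s1']), ([], Quadratic G1, [s1']),
     ([s2'], Quadratic G1, [s1']), ([], Quadratic G2, [s1', s1']), ([], Braid, [s1', s1']),
     ([s1'], Braid, [s2', s1', s1']), ([s1', s2'], Braid, [s1', s2', s1']), ([s2], Cubic, [s1']),
     ([s2], Braid, [])]"

(* s^-1 = - (t0 t1)^-1 (s^2 + (1 - t0 - t1) s + (t0 t1 - t0 - t1)) by the quadratic relation. *)
definition quadratic_inverse_cols :: "lvec list \<Rightarrow> lvec list" where
  "quadratic_inverse_cols P =
    map (\<lambda>i. vec_scale [((-1, -1), -1)]
        (vec_add (lvec_act P (P ! i))
          (vec_add (vec_scale [((0, 0), 1), ((0, 1), -1), ((1, 0), -1)] (P ! i))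
            (vec_scale [((0, 1), -1), ((1, 0), -1), ((1, 1), 1)] (unit_vec (length P) i)))))
      [0..<length P]"

fun mats_of :: "lvec list \<Rightarrow> lvec list \<Rightarrow> lvec list \<Rightarrow> lvec list \<Rightarrow> lmats" where
  "mats_of P1 N1 P2 N2 (G1, True) = P1"
| "mats_of P1 N1 P2 N2 (G1, False) = N1"
| "mats_of P1 N1 P2 N2 (G2, True) = P2"
| "mats_of P1 N1 P2 N2 (G2, False) = N2"

(* The left regular representation read off the table: column j of s_g expands s_g b_j. *)
definition table_mats :: "table \<Rightarrow> bword list \<Rightarrow> lmats" where
  "table_mats T ws =
    (let P1 = map (\<lambda>w. the (map_of T (free_reduce (s1 # w)))) ws;
         P2 = map (\<lambda>w. the (map_of T (free_reduce (s2 # w)))) ws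
     in mats_of P1 (quadratic_inverse_cols P1) P2 (quadratic_inverse_cols P2))"

lemma C3_certificate_checks:
  "case run_certificate (basis_table C3_words) C3_certificate of
     None \<Rightarrow> False
   | Some T \<Rightarrow> table_closed T C3_words \<and> C3_matrix_model 20 (table_mats T C3_words)
       \<and> map (\<lambda>w. word_act (table_mats T C3_words) w (unit_vec 20 0)) C3_words = map (unit_vec 20) [0..<20]
       \<and> map_option (\<lambda>v. (length v, v ! 18)) (map_of T [s1, s2', s1]) = Some (20, [((1, 1), 1)])"
  by code_simp

lemma C3_words_basis:
  "C3_span (map word C3_words) = UNIV" "C3_independent (map word C3_words)"
  "\<exists>d. word [s1, s2', s1] - lincomb (map word C3_words) d \<in> C3_ideal \<and> d 18 \<noteq> 0"
proof -
  obtain T where run: "run_certificate (basis_table C3_words) C3_certificate = Some T"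
    and closed: "table_closed T C3_words" and model: "C3_matrix_model 20 (table_mats T C3_words)"
    and units: "map (\<lambda>w. word_act (table_mats T C3_words) w (unit_vec 20 0)) C3_words
      = map (unit_vec 20) [0..<20]"
    and entry: "map_option (\<lambda>v. (length v, v ! 18)) (map_of T [s1, s2', s1]) = Some (20, [((1, 1), 1)])"
    using C3_certificate_checks by (auto split: option.splits)
  have sound: "table_sound (map word C3_words) T"
    by (rule run_certificate_sound[OF basis_table_sound run])
  show "C3_span (map word C3_words) = UNIV"
    by (rule C3_span_by_table[OF sound closed]) (simp add: C3_words_def)
  show "C3_independent (map word C3_words)"
    by (rule C3_independent_by_model[OF model _ units]) (simp add: C3_words_def)
  obtain v where v: "map_of T [s1, s2', s1] = Some v" "length v = 20" "v ! 18 = [((1, 1), 1)]"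
    using entry by auto
  have "word [s1, s2', s1] - lincomb (map word C3_words) (vec_val v) \<in> C3_ideal"
    using sound v(1) by (auto simp: table_sound_def dest: map_of_SomeD)
  moreover have "vec_val v 18 \<noteq> 0"
    using v t0_nonzero t1_nonzero by (simp add: vec_val_def lpoly_val_def)
  ultimately show "\<exists>d. word [s1, s2', s1] - lincomb (map word C3_words) d \<in> C3_ideal \<and> d 18 \<noteq> 0"
    by blast
qed

lemma C3_basis_eq_words: "C3_basis (sgb G1 * sg G2 * sgb G1) = map word C3_words"
  by (simp add: C3_basis_def C3_words_def sg_eq_word sgb_eq_word word_Nil flip: word_append)

lemma C3_basis_eq_exchanged:
  "C3_basis (sg G1 * sgb G2 * sg G1) = (map word C3_words)[18 := word [s1, s2', s1]]"
  by (simp add: C3_basis_def C3_words_def sg_eq_word sgb_eq_word word_Nil flip: word_append)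

theorem corollary2p5:
  fixes x :: alg3
  assumes "x = sgb G1 * sg G2 * sgb G1 \<or> x = sg G1 * sgb G2 * sg G1"
  shows "length (C3_basis x) = 20
    \<and> (\<forall>a :: alg3. \<exists>c :: nat \<Rightarrow> QT.
           a - (\<Sum>i<20. scal (c i) * C3_basis x ! i) \<in> C3_ideal)
    \<and> (\<forall>c :: nat \<Rightarrow> QT.
           (\<Sum>i<20. scal (c i) * C3_basis x ! i) \<in> C3_ideal \<longrightarrow> (\<forall>i<20. c i = 0))"
proof -
  obtain d where d: "word [s1, s2', s1] - lincomb (map word C3_words) d \<in> C3_ideal" "d 18 \<noteq> 0"
    using C3_words_basis(3) by blast
  have len: "length (C3_basis x) = 20"
    by (simp add: C3_basis_def)
  have "C3_span (C3_basis x) = UNIV \<and> C3_independent (C3_basis x)"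
    using assms C3_words_basis(1,2) C3_basis_exchange[OF C3_words_basis(1,2) _ d]
    by (auto simp: C3_basis_eq_words C3_basis_eq_exchanged C3_words_def)
  with len show ?thesis
    unfolding C3_span_def C3_independent_def lincomb_def by auto
qed

end
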